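(* Let $x,y$ be real numbers with $y\neq 0$ such that either $x/y> 1$ or $x/y\le -(\sqrt2+1)^2$. Then $$\sum_{k = 1}^\infty \frac{(27xy)^k }{k(x + y)^{2k} \binom{3k}k} = \frac{\sqrt[3]{xy} }{x - y}\left(2\sqrt 3\big(\sqrt[3]{x} + \sqrt[3]{y} \big)\arctan \bigg( \frac{\sqrt 3\sqrt[3]{y}}{2\sqrt[3]{x} - \sqrt[3]{y} } \bigg)+ \big(\sqrt[3]{x} - \sqrt[3]{y} \big)\log \bigg( \frac{x + y}{\big(\sqrt[3]{x} + \sqrt[3]{y} \big)^3 } \bigg)\right).$$
   Context: $\sqrt[3]{t}$ denotes the real cube root of the real number $t$ (negative for $t<0$). *)

theory Defs
  imports "HOL-Analysis.Analysis"
begin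

end

theory Submission
  imports Defs "HOL-Real_Asymp.Real_Asymp"
begin

text \<open>Since \<open>1 / (k (3k choose k))\<close> is the Beta integral of \<open>t^(k-1) (1 - t)^(2k)\<close> over \<open>[0,1]\<close>,
  summing the geometric series under the integral sign turns the series into the integral of
  \<open>z (1 - t)^2 / (1 - z t (1 - t)^2)\<close> over \<open>[0,1]\<close>, where \<open>z = 27xy / (x + y)^2\<close>. Dominated
  convergence applies because \<open>t (1 - t)^2 \<le> 4/27\<close> on \<open>[0,1]\<close>, with equality only at \<open>t = 1/3\<close>,
  and the hypothesis on \<open>x / y\<close> gives \<open>-27/4 \<le> z < 27/4\<close>. With \<open>u = cbrt (x / y)\<close> the cubic
  denominator has the real root \<open>r = (u + 1)^2 / (3u)\<close>, and partial fractions produce a logarithm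
  and a difference of two arctangents. That difference equals \<open>3 arctan (sqrt 3 / (2u - 1))\<close>,
  because the defect has zero derivative for \<open>\<bar>u\<bar> > 1\<close> and vanishes at \<open>\<plusminus>\<infinity>\<close>.\<close>

section \<open>The series as an integral\<close>

lemma has_integral_power_mult_power_one_minus:
  "((\<lambda>t::real. t ^ m * (1 - t) ^ n) has_integral (fact m * fact n / fact (m + n + 1))) {0..1}"
proof -
  have "((\<lambda>t. t powr (real (Suc m) - 1) * (1 - t) powr (real (Suc n) - 1))
          has_integral Beta (real (Suc m)) (real (Suc n))) {0<..<1}"
    using has_integral_Beta_real[of "real (Suc m)" "real (Suc n)"]
    by (simp add: has_integral_Icc_iff_Ioo)
  then have "((\<lambda>t. t ^ m * (1 - t) ^ n) has_integral Beta (real (Suc m)) (real (Suc n))) {0<..<1}"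
    by (rule has_integral_spike_finite[of "{}", rotated 2]) (auto simp: powr_realpow)
  moreover have "Beta (real (Suc m)) (real (Suc n)) = fact m * fact n / fact (m + n + 1)"
  proof -
    have "Gamma (real (Suc k)) = fact k" for k
      using Gamma_fact[of k, where 'a=real] by (simp add: add.commute)
    from this[of m] this[of n] this[of "m + n + 1"] show ?thesis
      unfolding Beta_def by (simp add: add_ac)
  qed
  ultimately show ?thesis
    by (simp add: has_integral_Icc_iff_Ioo)
qed

lemma inverse_binomial_has_integral:
  "((\<lambda>t::real. t ^ j * (1 - t) ^ (2 * Suc j)) has_integral
     1 / (real (Suc j) * real (3 * Suc j choose Suc j))) {0..1}"
proof -
  define k where "k = Suc j"
  have "real (3 * k choose k) = fact (3 * k) / (fact k * fact (2 * k))"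
    by (subst binomial_fact) (auto simp: k_def)
  moreover have "fact k = real k * (fact j :: real)"
    by (simp add: k_def)
  ultimately have reciprocal: "1 / (real k * real (3 * k choose k)) = fact j * fact (2 * k) / fact (3 * k)"
    by (simp add: field_simps k_def del: of_nat_Suc)
  have index: "j + 2 * k + 1 = 3 * k"
    by (simp add: k_def)
  show ?thesis
    using has_integral_power_mult_power_one_minus[of j "2 * k"]
    unfolding k_def[symmetric] reciprocal index .
qed

lemma abs_sum_power_le:
  fixes w \<delta> :: real
  assumes "\<bar>w\<bar> \<le> 1" "0 < \<delta>" "\<delta> \<le> 1 - w"
  shows "\<bar>\<Sum>k<n. w ^ k\<bar> \<le> 2 / \<delta>"
proof -
  have "(\<Sum>k<n. w ^ k) = (1 - w ^ n) / (1 - w)"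
    using assms by (simp add: sum_gp_strict)
  moreover have "\<bar>w ^ n\<bar> \<le> 1"
    unfolding power_abs using assms(1) by (simp add: power_le_one)
  then have "\<bar>1 - w ^ n\<bar> \<le> 2"
    by arith
  ultimately show ?thesis
    using assms by (auto simp: abs_div intro!: frac_le)
qed

lemma geometric_ratio_bounds:
  fixes z t :: real
  assumes "\<bar>z\<bar> \<le> 27/4" "0 \<le> t" "t \<le> 1"
  shows "\<bar>z * (t * (1 - t)^2)\<bar> \<le> 1"
    and "t \<noteq> 1/3 \<Longrightarrow> \<bar>z * (t * (1 - t)^2)\<bar> < 1"
    and "min 1 (1 - 4*z/27) \<le> 1 - z * (t * (1 - t)^2)"
proof -
  have gap: "4/27 - t * (1 - t)^2 = (4 - 3*t) * (3*t - 1)^2 / 27"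
    by (simp add: power2_eq_square field_simps)
  have "0 \<le> (4 - 3*t) * (3*t - 1)^2"
    using assms(3) by simp
  then have p: "0 \<le> t * (1 - t)^2" "t * (1 - t)^2 \<le> 4/27"
    using assms(2) gap by simp_all
  have "\<bar>z * (t * (1 - t)^2)\<bar> = \<bar>z\<bar> * (t * (1 - t)^2)"
    using assms(2) by (simp add: abs_mult)
  also have "\<dots> \<le> 27/4 * (t * (1 - t)^2)"
    using p assms(1) by (intro mult_right_mono)
  finally have le: "\<bar>z * (t * (1 - t)^2)\<bar> \<le> 27/4 * (t * (1 - t)^2)" .
  then show "\<bar>z * (t * (1 - t)^2)\<bar> \<le> 1"
    using p by linarith
  show "\<bar>z * (t * (1 - t)^2)\<bar> < 1" if "t \<noteq> 1/3"
  proof -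
    have "0 < (4 - 3*t) * (3*t - 1)^2"
      using that assms(3) by simp
    then show ?thesis
      using le gap by linarith
  qed
  show "min 1 (1 - 4*z/27) \<le> 1 - z * (t * (1 - t)^2)"
  proof (cases "z \<le> 0")
    case True
    then show ?thesis using p by (simp add: mult_nonpos_nonneg)
  next
    case False
    then have "z * (t * (1 - t)^2) \<le> z * (4/27)"
      using p by (intro mult_left_mono) auto
    then show ?thesis by linarith
  qed
qed

lemma geometric_integrand_bound:
  fixes z t :: real
  assumes "-27/4 \<le> z" "z < 27/4" "0 \<le> t" "t \<le> 1"
  shows "\<bar>z * (1 - t)^2 * (\<Sum>k<n. (z * (t * (1 - t)^2)) ^ k)\<bar> \<le> \<bar>z\<bar> * (2 / min 1 (1 - 4*z/27))"
proof -
  have "(1 - t)^2 \<le> 1" "\<bar>\<Sum>k<n. (z * (t * (1 - t)^2)) ^ k\<bar> \<le> 2 / min 1 (1 - 4*z/27)"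
    using assms geometric_ratio_bounds[of z t] by (auto intro!: power_le_one abs_sum_power_le)
  then have "\<bar>z\<bar> * (1 - t)^2 * \<bar>\<Sum>k<n. (z * (t * (1 - t)^2)) ^ k\<bar> \<le> \<bar>z\<bar> * 1 * (2 / min 1 (1 - 4*z/27))"
    by (intro mult_mono) auto
  then show ?thesis
    by (simp add: abs_mult)
qed

lemma inverse_binomial_partial_sum_has_integral:
  fixes z :: real
  shows "((\<lambda>t. z * (1 - t)^2 * (\<Sum>k<n. (z * (t * (1 - t)^2)) ^ k)) has_integral
          (\<Sum>k<n. z ^ Suc k / (real (Suc k) * real (3 * Suc k choose Suc k)))) {0..1}"
proof -
  have summand: "z * (1 - t)^2 * (z * (t * (1 - t)^2)) ^ k = z ^ Suc k * (t ^ k * (1 - t) ^ (2 * Suc k))"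
    for t k
  proof -
    have "(1 - t) ^ (2 * Suc k) = (1 - t)^2 * ((1 - t)^2) ^ k"
      by (simp only: power_mult power_Suc)
    then show ?thesis
      by (simp only: power_mult_distrib power_Suc[of z] ac_simps)
  qed
  show ?thesis
    unfolding sum_distrib_left summand
    by (intro has_integral_sum finite_lessThan)
       (use has_integral_mult_right[OF inverse_binomial_has_integral] in simp)
qed

lemma inverse_binomial_series_integral:
  fixes z :: real
  assumes "-27/4 \<le> z" "z < 27/4"
  shows "(\<lambda>n. z ^ Suc n / (real (Suc n) * real (3 * Suc n choose Suc n))) sums
           integral {0..1} (\<lambda>t. z * (1 - t)^2 / (1 - z * t * (1 - t)^2))"
proof -
  define w where "w t = z * (t * (1 - t)^2)" for t
  define f where "f n t = z * (1 - t)^2 * (\<Sum>k<n. w t ^ k)" for n t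
  define g where "g t = z * (1 - t)^2 / (1 - z * t * (1 - t)^2)" for t
  define \<delta> where "\<delta> = min 1 (1 - 4*z/27)"
  \<comment> \<open>For \<open>z = -27/4\<close> the ratio \<open>w t\<close> equals \<open>-1\<close> at \<open>t = 1/3\<close>, so that point is removed.\<close>
  define S where "S = {0..1::real} - {1/3}"
  have integral_S: "integral S h = integral {0..1} h" for h :: "real \<Rightarrow> real"
    by (rule integral_spike_set; rule negligible_subset[OF negligible_sing[of "1/3"]]) (auto simp: S_def)
  have integrable_S: "h integrable_on S" if "h integrable_on {0..1}" for h :: "real \<Rightarrow> real"
    by (rule integrable_spike_set[OF that]; rule negligible_subset[OF negligible_sing[of "1/3"]])
      (auto simp: S_def)
  have f_integral:
    "(f n has_integral (\<Sum>k<n. z ^ Suc k / (real (Suc k) * real (3 * Suc k choose Suc k)))) {0..1}" for n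
    unfolding f_def w_def by (rule inverse_binomial_partial_sum_has_integral)
  have f_bound: "norm (f n t) \<le> \<bar>z\<bar> * (2 / \<delta>)" if "t \<in> S" for n t
    using that assms geometric_integrand_bound[of z t n] by (simp add: S_def f_def w_def \<delta>_def)
  have f_tendsto: "(\<lambda>n. f n t) \<longlonglongrightarrow> g t" if "t \<in> S" for t
  proof -
    have "\<bar>w t\<bar> < 1"
      using that assms geometric_ratio_bounds(2)[of z t] by (auto simp: S_def w_def)
    then have "(\<lambda>n. \<Sum>k<n. w t ^ k) \<longlonglongrightarrow> 1 / (1 - w t)"
      using geometric_sums[of "w t"] by (simp add: sums_def)
    then show ?thesis
      unfolding f_def g_def w_def by (auto intro!: tendsto_eq_intros simp: ac_simps)
  qed
  have "(\<lambda>n. integral S (f n)) \<longlonglongrightarrow> integral S g"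
    using f_integral f_bound f_tendsto
    by (intro dominated_convergence(2)[where h = "\<lambda>_. \<bar>z\<bar> * (2 / \<delta>)"] integrable_S)
       (auto intro: has_integral_integrable)
  then show ?thesis
    unfolding integral_S integral_unique[OF f_integral] g_def sums_def .
qed

section \<open>Integrating the rational function\<close>

lemma cubic_partial_fractions:
  fixes r t :: real
  assumes "3 * r \<noteq> 1" "t \<noteq> r" "t^2 + (r - 2) * t + (r - 1)^2 \<noteq> 0"
  shows "(1 - t)^2 / (r * (r - 1)^2 - t * (1 - t)^2)
           = ((r - 1) / (t - r) + r * (2 * t + r - 3) / (t^2 + (r - 2) * t + (r - 1)^2)) / (1 - 3 * r)"
proof -
  define d where "d = t^2 + (r - 2) * t + (r - 1)^2"
  have "d \<noteq> 0"
    using assms(3) by (simp add: d_def)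
  have "(1 - t)^2 / (r * (r - 1)^2 - t * (1 - t)^2) = (1 - t)^2 / ((r - t) * d)"
    by (simp add: d_def power2_eq_square algebra_simps)
  also have "\<dots> = (3 * r - 1) * (1 - t)^2 / ((t - r) * d) / (1 - 3 * r)"
    using assms(1,2) \<open>d \<noteq> 0\<close> by (simp add: divide_simps) (simp add: algebra_simps)
  also have "(3 * r - 1) * (1 - t)^2 = (r - 1) * d + r * (2 * t + r - 3) * (t - r)"
    by (simp add: d_def power2_eq_square algebra_simps)
  also have "((r - 1) * d + r * (2 * t + r - 3) * (t - r)) / ((t - r) * d)
      = (r - 1) / (t - r) + r * (2 * t + r - 3) / d"
    using assms(2) \<open>d \<noteq> 0\<close> by (simp add: field_simps)
  finally show ?thesis
    by (simp only: d_def)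
qed

definition cubic_antiderivative :: "real \<Rightarrow> real \<Rightarrow> real \<Rightarrow> real" where
  "cubic_antiderivative r m t =
     ((r - 1) * ln ((r - t) / r) + r * ln ((t^2 + (r - 2) * t + (r - 1)^2) / (r - 1)^2)
      - r / m * (arctan ((t - 1 + r / 2) / m) - arctan ((r - 2) / (2 * m)))) / (1 - 3 * r)"

lemma DERIV_cubic_antiderivative:
  fixes r m t :: real
  assumes r: "r < 0 \<or> 1 < r" and m: "m \<noteq> 0" "m^2 = r * (3 * r - 4) / 4"
    and t: "0 \<le> t" "t \<le> 1"
  shows "(cubic_antiderivative r m has_real_derivative
           (1 - t)^2 / (r * (r - 1)^2 - t * (1 - t)^2)) (at t)"
proof -
  define D where "D t = t^2 + (r - 2) * t + (r - 1)^2" for t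
  have D_eq: "D t = (t - 1 + r / 2)^2 + m^2"
    unfolding D_def m(2) by (simp add: power2_eq_square field_simps)
  then have "0 < D t"
    using m(1) by (simp add: add_nonneg_pos)
  have "3 * r \<noteq> 1" "0 < (r - t) / r" "t \<noteq> r"
    using r t by (auto simp: divide_pos_neg divide_neg_neg)
  have "((\<lambda>t. arctan ((t - 1 + r / 2) / m) - arctan ((r - 2) / (2 * m))) has_real_derivative m / D t) (at t)"
    using \<open>0 < D t\<close> m(1) by (auto intro!: derivative_eq_intros simp: D_eq field_simps power2_eq_square)
  moreover have "((\<lambda>t. ln ((r - t) / r)) has_real_derivative 1 / (t - r)) (at t)"
    using \<open>0 < (r - t) / r\<close> \<open>t \<noteq> r\<close> r by (auto intro!: derivative_eq_intros simp: field_simps)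
  moreover have "(D has_real_derivative 2 * t + r - 2) (at t)"
    unfolding D_def[abs_def] by (auto intro!: derivative_eq_intros)
  then have "((\<lambda>t. ln (D t / (r - 1)^2)) has_real_derivative (2 * t + r - 2) / D t) (at t)"
    using \<open>0 < D t\<close> r by (auto intro!: derivative_eq_intros simp: field_simps)
  ultimately have "(cubic_antiderivative r m has_real_derivative
      ((r - 1) * (1 / (t - r)) + r * ((2 * t + r - 2) / D t) - r / m * (m / D t)) / (1 - 3 * r)) (at t)"
    unfolding cubic_antiderivative_def[abs_def] D_def[symmetric]
    by (intro DERIV_cdivide DERIV_diff DERIV_add DERIV_cmult)
  moreover have "(r - 1) * (1 / (t - r)) + r * ((2 * t + r - 2) / D t) - r / m * (m / D t)
      = (r - 1) / (t - r) + r * (2 * t + r - 3) / D t"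
    using m(1) \<open>0 < D t\<close> by (simp add: field_simps)
  moreover have "((r - 1) / (t - r) + r * (2 * t + r - 3) / D t) / (1 - 3 * r)
      = (1 - t)^2 / (r * (r - 1)^2 - t * (1 - t)^2)"
    unfolding D_def using \<open>3 * r \<noteq> 1\<close> \<open>t \<noteq> r\<close> \<open>0 < D t\<close>
    by (intro cubic_partial_fractions[symmetric]) (auto simp: D_def)
  ultimately show ?thesis
    by (simp only:)
qed

lemma cubic_antiderivative_at_0: "cubic_antiderivative r m 0 = 0"
  by (simp add: cubic_antiderivative_def power2_eq_square field_simps)

lemma cubic_antiderivative_at_1:
  fixes r m :: real
  assumes "r < 0 \<or> 1 < r"
  shows "cubic_antiderivative r m 1
           = (ln (r / (r - 1)) - r / m * (arctan (r / (2 * m)) - arctan ((r - 2) / (2 * m)))) / (1 - 3 * r)"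
proof -
  have "1 + (r - 2) + (r - 1)^2 = r * (r - 1)"
    by (simp add: power2_eq_square algebra_simps)
  then have "(1 + (r - 2) + (r - 1)^2) / (r - 1)^2 = r / (r - 1)"
    using assms by (auto simp: power2_eq_square)
  moreover have "ln ((r - 1) / r) = - ln (r / (r - 1))"
    using assms by (subst ln_inverse[symmetric]) (auto simp: divide_pos_neg divide_neg_neg)
  ultimately have "(r - 1) * ln ((r - 1) / r) + r * ln ((1 + (r - 2) + (r - 1)^2) / (r - 1)^2) = ln (r / (r - 1))"
    by (simp add: algebra_simps)
  moreover have "(1 - 1 + r / 2) / m = r / (2 * m)"
    by simp
  ultimately show ?thesis
    unfolding cubic_antiderivative_def by simp
qed

lemma has_integral_cubic_rational:
  fixes r m :: real
  assumes "r < 0 \<or> 1 < r" "m \<noteq> 0" "m^2 = r * (3 * r - 4) / 4"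
  shows "((\<lambda>t. (1 - t)^2 / (r * (r - 1)^2 - t * (1 - t)^2)) has_integral
           (ln (r / (r - 1)) - r / m * (arctan (r / (2 * m)) - arctan ((r - 2) / (2 * m)))) / (1 - 3 * r))
         {0..1}"
proof -
  have "((\<lambda>t. (1 - t)^2 / (r * (r - 1)^2 - t * (1 - t)^2)) has_integral
          cubic_antiderivative r m 1 - cubic_antiderivative r m 0) {0..1}"
    using DERIV_cubic_antiderivative[OF assms]
    by (intro fundamental_theorem_of_calculus)
       (auto simp: has_real_derivative_iff_has_vector_derivative[symmetric] intro: has_field_derivative_at_within)
  then show ?thesis
    by (simp add: cubic_antiderivative_at_0 cubic_antiderivative_at_1[OF assms(1)])
qed

section \<open>An arctangent identity\<close>

lemma nonzero_factors_if_abs_gt_1: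
  fixes u :: real
  assumes "1 < \<bar>u\<bar>"
  shows "u \<noteq> 0" "u + 1 \<noteq> 0" "u - 1 \<noteq> 0" "2 * u - 1 \<noteq> 0" "u^2 - 1 \<noteq> 0"
    and "u^3 + 1 \<noteq> 0" "u^3 - 1 \<noteq> 0" "0 < u^2 - u + 1" "0 < u^2 + u + 1"
proof -
  have "0 < (u - 1/2)^2 + 3/4" "0 < (u + 1/2)^2 + 3/4"
    by (simp_all add: add_nonneg_pos)
  then show pos: "0 < u^2 - u + 1" "0 < u^2 + u + 1"
    by (simp_all add: power2_eq_square algebra_simps)
  have "1 < \<bar>u\<bar>^2"
    using one_less_power[OF assms, of 2] by simp
  then show "u \<noteq> 0" "u + 1 \<noteq> 0" "u - 1 \<noteq> 0" "2 * u - 1 \<noteq> 0" "u^2 - 1 \<noteq> 0"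
    using assms by auto
  moreover have "u^3 + 1 = (u + 1) * (u^2 - u + 1)" "u^3 - 1 = (u - 1) * (u^2 + u + 1)"
    by (simp_all add: power2_eq_square power3_eq_cube algebra_simps)
  ultimately show "u^3 + 1 \<noteq> 0" "u^3 - 1 \<noteq> 0"
    using pos by simp_all
qed

lemma DERIV_zero_tendsto_zero_imp_zero:
  fixes f :: "real \<Rightarrow> real"
  assumes "convex S" "\<And>x. x \<in> S \<Longrightarrow> (f has_real_derivative 0) (at x)"
    and "(f \<longlongrightarrow> 0) F" "F \<noteq> bot" "eventually (\<lambda>x. x \<in> S) F" "x \<in> S"
  shows "f x = 0"
proof -
  obtain c where c: "\<And>x. x \<in> S \<Longrightarrow> f x = c"
    using has_field_derivative_zero_constant[of S f] assms(1,2)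
    by (metis has_field_derivative_at_within)
  have "eventually (\<lambda>x. f x = c) F"
    using assms(5) by eventually_elim (rule c)
  with assms(3) have "((\<lambda>_. c) \<longlongrightarrow> 0) F"
    by (rule Lim_transform_eventually)
  with assms(4) have "c = 0"
    by (simp add: tendsto_const_iff)
  with c assms(6) show ?thesis by simp
qed

lemma DERIV_arctan_quotient:
  fixes p q :: "real \<Rightarrow> real"
  assumes "(p has_real_derivative p') (at x)" "(q has_real_derivative q') (at x)" "q x \<noteq> 0"
  shows "((\<lambda>x. arctan (p x / q x)) has_real_derivative
           (p' * q x - p x * q') / ((p x)^2 + (q x)^2)) (at x)"
proof -
  have "((\<lambda>x. arctan (p x / q x)) has_real_derivative
          inverse (1 + (p x / q x)^2) * ((p' * q x - p x * q') / (q x)^2)) (at x)"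
    using assms by (auto intro!: derivative_eq_intros simp: power2_eq_square)
  moreover have "inverse (1 + (p x / q x)^2) * ((p' * q x - p x * q') / (q x)^2)
      = (p' * q x - p x * q') / ((p x)^2 + (q x)^2)"
  proof -
    have "0 < (p x)^2 + (q x)^2"
      using assms(3) by (simp add: add_nonneg_pos)
    moreover have "1 + (p x / q x)^2 = ((p x)^2 + (q x)^2) / (q x)^2"
      using assms(3) by (simp add: power_divide field_simps)
    ultimately show ?thesis
      using assms(3) by simp
  qed
  ultimately show ?thesis
    by simp
qed

definition arctan_defect :: "real \<Rightarrow> real" where
  "arctan_defect u = arctan ((u + 1) / (sqrt 3 * (u - 1)))
     - arctan ((u^2 - 4 * u + 1) / (sqrt 3 * (u^2 - 1))) - 3 * arctan (sqrt 3 / (2 * u - 1))"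

lemma DERIV_arctan_defect:
  fixes u :: real
  assumes "1 < \<bar>u\<bar>"
  shows "(arctan_defect has_real_derivative 0) (at u)"
proof -
  note u = nonzero_factors_if_abs_gt_1[OF assms]
  define Q where "Q = u^2 - u + 1"
  have "0 < Q"
    using u by (simp add: Q_def)
  have derivative: "(arctan_defect has_real_derivative
      (1 * (sqrt 3 * (u - 1)) - (u + 1) * sqrt 3) / ((u + 1)^2 + (sqrt 3 * (u - 1))^2)
      - ((2 * u - 4) * (sqrt 3 * (u^2 - 1)) - (u^2 - 4 * u + 1) * (sqrt 3 * (2 * u)))
          / ((u^2 - 4 * u + 1)^2 + (sqrt 3 * (u^2 - 1))^2)
      - 3 * ((0 * (2 * u - 1) - sqrt 3 * 2) / ((sqrt 3)^2 + (2 * u - 1)^2))) (at u)"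
    (is "(_ has_real_derivative ?d) _")
    unfolding arctan_defect_def[abs_def]
    by (intro DERIV_diff DERIV_cmult DERIV_arctan_quotient) (use u in \<open>auto intro!: derivative_eq_intros\<close>)
  have "(u + 1)^2 + (sqrt 3 * (u - 1))^2 = 4 * Q"
    and "(2 * u - 4) * (sqrt 3 * (u^2 - 1)) - (u^2 - 4 * u + 1) * (sqrt 3 * (2 * u)) = 4 * sqrt 3 * Q"
    and "(u^2 - 4 * u + 1)^2 + (sqrt 3 * (u^2 - 1))^2 = 4 * Q^2"
    and "(sqrt 3)^2 + (2 * u - 1)^2 = 4 * Q"
    unfolding power_mult_distrib Q_def by (simp_all add: power2_eq_square algebra_simps)
  then have "?d = 0"
    using \<open>0 < Q\<close> by (simp add: field_simps power2_eq_square)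
  with derivative show ?thesis
    by simp
qed

lemma arctan_defect_tendsto_zero:
  assumes "F = at_top \<or> F = at_bot"
  shows "(arctan_defect \<longlongrightarrow> 0) F"
proof -
  have "((\<lambda>u::real. (u + 1) / (u - 1)) \<longlongrightarrow> 1) F"
    and "((\<lambda>u::real. (u^2 - 4 * u + 1) / (u^2 - 1)) \<longlongrightarrow> 1) F"
    and "((\<lambda>u::real. sqrt 3 / (2 * u - 1)) \<longlongrightarrow> 0) F"
    using assms by (auto; real_asymp)+
  then have "(arctan_defect \<longlongrightarrow> arctan (1 / sqrt 3) - arctan (1 / sqrt 3) - 3 * arctan 0) F"
    unfolding arctan_defect_def[abs_def] mult.commute[of "sqrt 3"] divide_divide_eq_left[symmetric]
    by (intro tendsto_intros) simp_all
  then show ?thesis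
    by simp
qed

lemma arctan_triple_identity:
  fixes u :: real
  assumes "1 < \<bar>u\<bar>"
  shows "arctan ((u + 1) / (sqrt 3 * (u - 1))) - arctan ((u^2 - 4 * u + 1) / (sqrt 3 * (u^2 - 1)))
           = 3 * arctan (sqrt 3 / (2 * u - 1))"
proof -
  have "arctan_defect u = 0"
  proof (cases "1 < u")
    case True
    show ?thesis
    proof (rule DERIV_zero_tendsto_zero_imp_zero[of "{1<..}" arctan_defect at_top u])
      show "(arctan_defect has_real_derivative 0) (at x)" if "x \<in> {1<..}" for x
        using that by (intro DERIV_arctan_defect) simp
    qed (use True arctan_defect_tendsto_zero[of at_top] in auto)
  next
    case False
    with assms have "u < -1" by linarith
    show ?thesis
    proof (rule DERIV_zero_tendsto_zero_imp_zero[of "{..< -1}" arctan_defect at_bot u])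
      show "(arctan_defect has_real_derivative 0) (at x)" if "x \<in> {..< -1}" for x
        using that by (intro DERIV_arctan_defect) simp
    qed (use \<open>u < -1\<close> arctan_defect_tendsto_zero[of at_bot] in auto)
  qed
  then show ?thesis
    by (simp add: arctan_defect_def)
qed

section \<open>The closed form\<close>

text \<open>\<open>r\<close> is the real root of the cubic \<open>r (r - 1)\<^sup>2 = 1 / z\<close> for \<open>z = 27 u\<^sup>3 / (u\<^sup>3 + 1)\<^sup>2\<close>;
  the complementary quadratic factor of the integrand's denominator is \<open>(t - 1 + r/2)\<^sup>2 + m\<^sup>2\<close>.\<close>

lemma cubic_parametrization:
  fixes u :: real
  assumes u: "1 < \<bar>u\<bar>"
  defines "r \<equiv> (u + 1)^2 / (3 * u)" and "m \<equiv> sqrt 3 * (u^2 - 1) / (6 * u)"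
  shows "r < 0 \<or> 1 < r" and "m \<noteq> 0" and "m^2 = r * (3 * r - 4) / 4"
    and "r * (r - 1)^2 = (u^3 + 1)^2 / (27 * u^3)" and "r / (r - 1) = (u + 1)^3 / (u^3 + 1)"
proof -
  note u = nonzero_factors_if_abs_gt_1[OF u]
  have r1: "r - 1 = (u^2 - u + 1) / (3 * u)"
    using u by (simp add: r_def power2_eq_square field_simps)
  show "r < 0 \<or> 1 < r"
  proof (cases "0 < u")
    case True
    then have "0 < r - 1"
      unfolding r1 using u(8) by simp
    then show ?thesis by simp
  next
    case False
    then show ?thesis using u by (simp add: r_def divide_pos_neg)
  qed
  show "m \<noteq> 0"
    using u by (simp add: m_def)
  show "m^2 = r * (3 * r - 4) / 4"
    using u by (simp add: m_def r_def power_divide power_mult_distrib field_simps) (simp add: eval_nat_numeral algebra_simps)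
  show "r * (r - 1)^2 = (u^3 + 1)^2 / (27 * u^3)"
    using u unfolding r1 by (simp add: r_def field_simps) (simp add: power2_eq_square power3_eq_cube algebra_simps)
  have "u^3 + 1 = (u + 1) * (u^2 - u + 1)"
    by (simp add: power2_eq_square power3_eq_cube algebra_simps)
  then show "r / (r - 1) = (u + 1)^3 / (u^3 + 1)"
    using u unfolding r1 by (simp add: r_def power2_eq_square power3_eq_cube)
qed

lemma cubic_integral_value_in_ratio:
  fixes u :: real
  assumes u: "1 < \<bar>u\<bar>"
  defines "r \<equiv> (u + 1)^2 / (3 * u)" and "m \<equiv> sqrt 3 * (u^2 - 1) / (6 * u)"
  shows "(ln (r / (r - 1)) - r / m * (arctan (r / (2 * m)) - arctan ((r - 2) / (2 * m)))) / (1 - 3 * r)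
           = u / (u^3 - 1) * (2 * sqrt 3 * (u + 1) * arctan (sqrt 3 / (2 * u - 1))
                               + (u - 1) * ln ((u^3 + 1) / (u + 1)^3))"
proof -
  note u = nonzero_factors_if_abs_gt_1[OF assms(1)]
  have "r / (2 * m) = (u + 1) / (sqrt 3 * (u - 1))"
    and "(r - 2) / (2 * m) = (u^2 - 4 * u + 1) / (sqrt 3 * (u^2 - 1))"
    and "r / m = 2 * (u + 1) / (sqrt 3 * (u - 1))"
    and "1 - 3 * r = - (u^2 + u + 1) / u"
    using u by (simp_all add: r_def m_def power2_eq_square field_simps)
  moreover have "ln (r / (r - 1)) = - ln ((u^3 + 1) / (u + 1)^3)"
    unfolding cubic_parametrization(5)[OF assms(1), folded r_def]
    using ln_inverse[of "(u^3 + 1) / (u + 1)^3"] by simp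
  ultimately have "(ln (r / (r - 1)) - r / m * (arctan (r / (2 * m)) - arctan ((r - 2) / (2 * m)))) / (1 - 3 * r)
      = (- ln ((u^3 + 1) / (u + 1)^3) - 2 * (u + 1) / (sqrt 3 * (u - 1)) * (3 * arctan (sqrt 3 / (2 * u - 1))))
        / (- (u^2 + u + 1) / u)"
    by (simp only: arctan_triple_identity[OF assms(1)])
  also have "\<dots> = u / ((u - 1) * (u^2 + u + 1)) * (6 / sqrt 3 * (u + 1) * arctan (sqrt 3 / (2 * u - 1))
                                                   + (u - 1) * ln ((u^3 + 1) / (u + 1)^3))"
    using u by (simp add: divide_simps) (simp add: algebra_simps)
  also have "6 / sqrt 3 = 2 * sqrt 3"
    by (simp add: field_simps)
  also have "(u - 1) * (u^2 + u + 1) = u^3 - 1"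
    by (simp add: power2_eq_square power3_eq_cube algebra_simps)
  finally show ?thesis .
qed

lemma inverse_binomial_integral_closed_form:
  fixes u :: real
  assumes "1 < \<bar>u\<bar>"
  defines "z \<equiv> 27 * u^3 / (u^3 + 1)^2"
  shows "integral {0..1} (\<lambda>t. z * (1 - t)^2 / (1 - z * t * (1 - t)^2))
           = u / (u^3 - 1) * (2 * sqrt 3 * (u + 1) * arctan (sqrt 3 / (2 * u - 1))
                               + (u - 1) * ln ((u^3 + 1) / (u + 1)^3))"
proof -
  define r where "r = (u + 1)^2 / (3 * u)"
  define m where "m = sqrt 3 * (u^2 - 1) / (6 * u)"
  note rm = cubic_parametrization[OF assms(1), folded r_def m_def]
  have "r * (r - 1)^2 \<noteq> 0"
    using rm(1) by auto
  have "z * (1 - t)^2 / (1 - z * t * (1 - t)^2) = (1 - t)^2 / (r * (r - 1)^2 - t * (1 - t)^2)" for t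
  proof -
    have "z = 1 / (r * (r - 1)^2)"
      unfolding rm(4) z_def by simp
    moreover have "1 - z * t * (1 - t)^2 = (r * (r - 1)^2 - t * (1 - t)^2) / (r * (r - 1)^2)"
      using \<open>r * (r - 1)^2 \<noteq> 0\<close> calculation by (simp add: field_simps)
    ultimately show ?thesis
      using \<open>r * (r - 1)^2 \<noteq> 0\<close> by simp
  qed
  then show ?thesis
    using integral_unique[OF has_integral_cubic_rational[OF rm(1-3)]]
      cubic_integral_value_in_ratio[OF assms(1), folded r_def m_def]
    by simp
qed

lemma inverse_binomial_series_closed_form:
  fixes u :: real
  assumes "1 < \<bar>u\<bar>" "-27/4 \<le> 27 * u^3 / (u^3 + 1)^2"
  shows "(\<lambda>n. (27 * u^3 / (u^3 + 1)^2) ^ Suc n / (real (Suc n) * real (3 * Suc n choose Suc n))) sums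
           (u / (u^3 - 1) * (2 * sqrt 3 * (u + 1) * arctan (sqrt 3 / (2 * u - 1))
                             + (u - 1) * ln ((u^3 + 1) / (u + 1)^3)))"
proof -
  have "u^3 - 1 \<noteq> 0" "u^3 + 1 \<noteq> 0"
    using nonzero_factors_if_abs_gt_1[OF assms(1)] by simp_all
  then have "0 < (u^3 - 1)^2" "0 < (u^3 + 1)^2"
    by simp_all
  moreover have "(u^3 + 1)^2 = (u^3 - 1)^2 + 4 * u^3"
    by (simp add: power2_eq_square algebra_simps)
  ultimately have "27 * u^3 / (u^3 + 1)^2 < 27/4"
    by (simp add: divide_less_eq)
  then show ?thesis
    using inverse_binomial_series_integral[OF assms(2)] inverse_binomial_integral_closed_form[OF assms(1)]
    by simp
qed

lemma cube_ratio_bounds: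
  fixes v :: real
  assumes "1 < v \<or> v \<le> - ((sqrt 2 + 1)^2)"
  shows "1 < \<bar>v\<bar>" and "-27/4 \<le> 27 * v / (v + 1)^2"
proof -
  have e: "(sqrt 2 + 1)^2 = 3 + 2 * sqrt 2"
    by (simp add: power2_eq_square algebra_simps)
  have "0 < sqrt 2"
    by simp
  then show "1 < \<bar>v\<bar>"
    using assms unfolding e by linarith
  then have "0 < (v + 1)^2"
    by auto
  have "8 \<le> (v + 3)^2"
    using assms
  proof
    assume "1 < v"
    then have "4^2 \<le> (v + 3)^2"
      by (intro power_mono) auto
    then show ?thesis by simp
  next
    assume "v \<le> - ((sqrt 2 + 1)^2)"
    then have "(2 * sqrt 2)^2 \<le> (- (v + 3))^2"
      unfolding e by (intro power_mono) auto
    then have "(2 * sqrt 2)^2 \<le> (v + 3)^2"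
      by (simp only: power2_minus)
    then show ?thesis
      by (simp add: power_mult_distrib)
  qed
  moreover have "(v + 3)^2 = v^2 + 6 * v + 9" "(v + 1)^2 = v^2 + 2 * v + 1"
    by (simp_all add: power2_eq_square algebra_simps)
  ultimately have "-27/4 * (v + 1)^2 \<le> 27 * v"
    by linarith
  then show "-27/4 \<le> 27 * v / (v + 1)^2"
    using \<open>0 < (v + 1)^2\<close> by (simp add: le_divide_eq)
qed

lemma inverse_binomial_series_cubes:
  fixes a b :: real
  assumes "b \<noteq> 0" and "1 < (a / b)^3 \<or> (a / b)^3 \<le> - ((sqrt 2 + 1)^2)"
  shows "(\<lambda>n. (27 * a^3 * b^3) ^ Suc n
              / (real (Suc n) * (a^3 + b^3) ^ (2 * Suc n) * real (3 * Suc n choose Suc n))) sums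
           (a * b / (a^3 - b^3) * (2 * sqrt 3 * (a + b) * arctan (sqrt 3 * b / (2 * a - b))
                                   + (a - b) * ln ((a^3 + b^3) / (a + b)^3)))"
proof -
  define u where "u = a / b"
  have a: "a = u * b"
    using assms(1) by (simp add: u_def)
  note bounds = cube_ratio_bounds[OF assms(2)[folded u_def]]
  have "1 < \<bar>u\<bar>"
    using bounds(1) power_less_imp_less_base[of 1 3 "\<bar>u\<bar>"] by (simp add: power_abs)
  have num: "27 * a^3 * b^3 = b^6 * (27 * u^3)" and den: "(a^3 + b^3)^2 = b^6 * (u^3 + 1)^2"
    unfolding a by (simp_all add: power_mult_distrib power2_eq_square eval_nat_numeral algebra_simps)
  have z: "27 * a^3 * b^3 / (a^3 + b^3)^2 = 27 * u^3 / (u^3 + 1)^2"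
    unfolding num den using assms(1) by simp
  have terms: "(27 * a^3 * b^3) ^ k / (K * (a^3 + b^3) ^ (2 * k) * c)
      = (27 * u^3 / (u^3 + 1)^2) ^ k / (K * c)" for k K c
    unfolding z[symmetric] power_divide power_mult[symmetric] by (simp add: mult_ac)
  have "u^3 - 1 \<noteq> 0"
    using bounds(1) by auto
  have "2 * a - b = b * (2 * u - 1)" "a^3 + b^3 = b^3 * (u^3 + 1)" "a + b = b * (u + 1)"
    unfolding a by (simp_all add: power_mult_distrib algebra_simps)
  then have args: "sqrt 3 * b / (2 * a - b) = sqrt 3 / (2 * u - 1)"
      "(a^3 + b^3) / (a + b)^3 = (u^3 + 1) / (u + 1)^3"
    using assms(1) by (simp_all add: power_mult_distrib)
  have "a * b / (a^3 - b^3) * (2 * sqrt 3 * (a + b) * arctan (sqrt 3 * b / (2 * a - b))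
                               + (a - b) * ln ((a^3 + b^3) / (a + b)^3))
      = u / (u^3 - 1) * (2 * sqrt 3 * (u + 1) * arctan (sqrt 3 / (2 * u - 1))
                         + (u - 1) * ln ((u^3 + 1) / (u + 1)^3))"
    unfolding args using assms(1) \<open>u^3 - 1 \<noteq> 0\<close>
    by (simp add: a power_mult_distrib field_simps) (simp add: power3_eq_cube algebra_simps)
  then show ?thesis
    unfolding terms using inverse_binomial_series_closed_form[OF \<open>1 < \<bar>u\<bar>\<close> bounds(2)] by simp
qed

theorem mainTheorem2:
  fixes x y :: real
  assumes "y \<noteq> 0"
    and "x / y > 1 \<or> x / y \<le> - ((sqrt 2 + 1) ^ 2)"
  shows "(\<lambda>n. let k = Suc n in
            (27 * x * y) ^ k / (real k * (x + y) ^ (2 * k) * real ((3 * k) choose k)))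
         sums
         (root 3 (x * y) / (x - y) *
           (2 * sqrt 3 * (root 3 x + root 3 y) *
              arctan (sqrt 3 * root 3 y / (2 * root 3 x - root 3 y))
            + (root 3 x - root 3 y) * ln ((x + y) / (root 3 x + root 3 y) ^ 3)))"
proof -
  have cube: "root 3 t ^ 3 = t" for t :: real
    by (simp add: odd_real_root_pow)
  have "x / y = (root 3 x / root 3 y)^3"
    by (simp add: power_divide cube)
  then show ?thesis
    using inverse_binomial_series_cubes[of "root 3 y" "root 3 x"] assms
    unfolding cube Let_def real_root_mult by simp
qed

end
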